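(* In a symmetric instance with $k$ signals ($2\le k\le n$), for every $s\in[-\infty,0]$ and every $s$-Pareto point collection $\mathcal P$, there exists a symmetric, direct and persuasive signaling scheme $\varphi^*$ with $k$ signals such that $u_{\mathcal S}(\varphi^* )=u_{\mathcal S}(\mathcal P)$ (and $u_{\mathcal R}(\varphi^* )=u_{\mathcal R}(\mathcal P)$).
   Context: Model: a receiver chooses one of the actions $[n]$; each action $i$ has a type $\theta_i$; the state $\boldsymbol\theta$ is drawn from a commonly known distribution $q$ over a finite set of type vectors; each type $t$ has receiver value $\rho(t)$ and sender value $\xi(t)$. A direct scheme with $k$ signals maps each state to a distribution over $k$ signals, each recommending an action; it is persuasive if for every signal $\sigma$ sent with positive probability recommending $i$, $\mathbb E[\rho(\theta_i)\mid\sigma]\ge\mathbb E[\rho(\theta_j)\mid\sigma]$ for all $j$; $u_{\mathcal S},u_{\mathcal R}$ denote expected utilities when the receiver follows. $\rho_E=\max_i\sum_{\boldsymbol\theta}q_{\boldsymbol\theta}\rho(\theta_i)$. Symmetric instance: $q_{\boldsymbol\theta}=q_{\boldsymbol\theta'}$ whenever $\boldsymbol\theta'$ is a permutation of $\boldsymbol\theta$; types in a state are pairwise distinct. For a permutation $\pi$ of $[n]$ let $(\pi\cdot\boldsymbol\theta)_{\pi(l)}=\theta_l$. A symmetric scheme is a direct scheme whose signals recommend actions $1,\dots,k$ and with $\varphi(\pi\cdot\boldsymbol\theta,\pi(i))=\varphi(\boldsymbol\theta,i)$ for all states, all $i\in[k]$, and all permutations $\pi$ of $[n]$ with $\pi([k])=[k]$.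 Identify each type $c$ with the point $(\rho(c),\xi(c))$. For a $k$-set $C$ of types, $q_C=\Pr[\{\theta_1,\dots,\theta_k\}=C]$. For $s\in(-\infty,0]$, $p\in\mathrm{conv}(C)$ corresponds to slope $s$ if it maximizes $y-sx$ over $(x,y)\in\mathrm{conv}(C)$; it corresponds to slope $-\infty$ if it maximizes the first coordinate over $\mathrm{conv}(C)$. A point collection $\mathcal P$ assigns to each $C$ with $q_C>0$ a point $p(C)=(p_{\mathcal R}(C),p_{\mathcal S}(C))\in\mathrm{conv}(C)$; $u_{\mathcal S}(\mathcal P)=\sum_Cq_Cp_{\mathcal S}(C)$, $u_{\mathcal R}(\mathcal P)=\sum_Cq_Cp_{\mathcal R}(C)$. $\mathcal P$ is $s$-Pareto if every $p(C)$ corresponds to slope $s$ and $u_{\mathcal R}(\mathcal P)\ge\rho_E$. *)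

theory Defs
  imports "HOL-Analysis.Analysis"
begin

text \<open>Actions are indexed by 1..n, signals of a symmetric scheme by 1..k (signal i recommends
action i).\<close>

definition states :: "nat \<Rightarrow> 'a set \<Rightarrow> (nat \<Rightarrow> 'a) set" where
  "states n T = Pi\<^sub>E {1..n} (\<lambda>_. T)"

definition perm_act :: "(nat \<Rightarrow> nat) \<Rightarrow> (nat \<Rightarrow> 'a) \<Rightarrow> (nat \<Rightarrow> 'a)" where
  "perm_act \<pi> \<theta> = \<theta> \<circ> inv \<pi>"

definition is_distribution :: "nat \<Rightarrow> 'a set \<Rightarrow> ((nat \<Rightarrow> 'a) \<Rightarrow> real) \<Rightarrow> bool" where
  "is_distribution n T q \<longleftrightarrow> (\<forall>\<theta>\<in>states n T. q \<theta> \<ge> 0) \<and> sum q (states n T) = 1"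

definition symmetric_instance :: "nat \<Rightarrow> 'a set \<Rightarrow> ((nat \<Rightarrow> 'a) \<Rightarrow> real) \<Rightarrow> bool" where
  "symmetric_instance n T q \<longleftrightarrow> is_distribution n T q
     \<and> (\<forall>\<pi> \<theta>. \<pi> permutes {1..n} \<longrightarrow> \<theta> \<in> states n T \<longrightarrow> q (perm_act \<pi> \<theta>) = q \<theta>)
     \<and> (\<forall>\<theta>\<in>states n T. q \<theta> > 0 \<longrightarrow> inj_on \<theta> {1..n})"

text \<open>phi theta i = probability of sending the signal recommending action i (i in 1..k) in state theta.\<close>
definition symmetric_scheme :: "nat \<Rightarrow> nat \<Rightarrow> 'a set \<Rightarrow> ((nat \<Rightarrow> 'a) \<Rightarrow> nat \<Rightarrow> real) \<Rightarrow> bool" where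
  "symmetric_scheme n k T \<phi> \<longleftrightarrow>
     (\<forall>\<theta>\<in>states n T. (\<forall>i\<in>{1..k}. \<phi> \<theta> i \<ge> 0) \<and> (\<Sum>i=1..k. \<phi> \<theta> i) = 1)
     \<and> (\<forall>\<pi> \<theta> i. \<pi> permutes {1..n} \<longrightarrow> \<pi> ` {1..k} = {1..k} \<longrightarrow> \<theta> \<in> states n T \<longrightarrow> i \<in> {1..k}
          \<longrightarrow> \<phi> (perm_act \<pi> \<theta>) (\<pi> i) = \<phi> \<theta> i)"

definition signal_prob :: "nat \<Rightarrow> 'a set \<Rightarrow> ((nat \<Rightarrow> 'a) \<Rightarrow> real) \<Rightarrow> ((nat \<Rightarrow> 'a) \<Rightarrow> nat \<Rightarrow> real) \<Rightarrow> nat \<Rightarrow> real" where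
  "signal_prob n T q \<phi> i = (\<Sum>\<theta>\<in>states n T. q \<theta> * \<phi> \<theta> i)"

definition cond_value :: "nat \<Rightarrow> 'a set \<Rightarrow> ((nat \<Rightarrow> 'a) \<Rightarrow> real) \<Rightarrow> ('a \<Rightarrow> real)
     \<Rightarrow> ((nat \<Rightarrow> 'a) \<Rightarrow> nat \<Rightarrow> real) \<Rightarrow> nat \<Rightarrow> nat \<Rightarrow> real" where
  "cond_value n T q \<rho> \<phi> i j =
     (\<Sum>\<theta>\<in>states n T. q \<theta> * \<phi> \<theta> i * \<rho> (\<theta> j)) / signal_prob n T q \<phi> i"

definition persuasive :: "nat \<Rightarrow> nat \<Rightarrow> 'a set \<Rightarrow> ((nat \<Rightarrow> 'a) \<Rightarrow> real) \<Rightarrow> ('a \<Rightarrow> real)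
     \<Rightarrow> ((nat \<Rightarrow> 'a) \<Rightarrow> nat \<Rightarrow> real) \<Rightarrow> bool" where
  "persuasive n k T q \<rho> \<phi> \<longleftrightarrow>
     (\<forall>i\<in>{1..k}. signal_prob n T q \<phi> i > 0 \<longrightarrow>
        (\<forall>j\<in>{1..n}. cond_value n T q \<rho> \<phi> i i \<ge> cond_value n T q \<rho> \<phi> i j))"

text \<open>Expected utility (f = xi gives u_S, f = rho gives u_R) when the receiver follows.\<close>
definition scheme_utility :: "nat \<Rightarrow> nat \<Rightarrow> 'a set \<Rightarrow> ((nat \<Rightarrow> 'a) \<Rightarrow> real) \<Rightarrow> ('a \<Rightarrow> real)
     \<Rightarrow> ((nat \<Rightarrow> 'a) \<Rightarrow> nat \<Rightarrow> real) \<Rightarrow> real" where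
  "scheme_utility n k T q f \<phi> = (\<Sum>\<theta>\<in>states n T. q \<theta> * (\<Sum>i=1..k. \<phi> \<theta> i * f (\<theta> i)))"

definition rho_E :: "nat \<Rightarrow> 'a set \<Rightarrow> ((nat \<Rightarrow> 'a) \<Rightarrow> real) \<Rightarrow> ('a \<Rightarrow> real) \<Rightarrow> real" where
  "rho_E n T q \<rho> = Max ((\<lambda>i. \<Sum>\<theta>\<in>states n T. q \<theta> * \<rho> (\<theta> i)) ` {1..n})"

definition qC :: "nat \<Rightarrow> nat \<Rightarrow> 'a set \<Rightarrow> ((nat \<Rightarrow> 'a) \<Rightarrow> real) \<Rightarrow> 'a set \<Rightarrow> real" where
  "qC n k T q C = (\<Sum>\<theta>\<in>{\<theta>\<in>states n T. \<theta> ` {1..k} = C}. q \<theta>)"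

definition conv_pts :: "('a \<Rightarrow> real) \<Rightarrow> ('a \<Rightarrow> real) \<Rightarrow> 'a set \<Rightarrow> (real \<times> real) set" where
  "conv_pts \<rho> \<xi> C = convex hull ((\<lambda>c. (\<rho> c, \<xi> c)) ` C)"

definition corresponds_slope :: "('a \<Rightarrow> real) \<Rightarrow> ('a \<Rightarrow> real) \<Rightarrow> ereal \<Rightarrow> 'a set \<Rightarrow> real \<times> real \<Rightarrow> bool" where
  "corresponds_slope \<rho> \<xi> s C p \<longleftrightarrow> p \<in> conv_pts \<rho> \<xi> C \<and>
     (if s = -\<infinity> then (\<forall>z\<in>conv_pts \<rho> \<xi> C. fst z \<le> fst p)
      else (\<forall>z\<in>conv_pts \<rho> \<xi> C. snd z - real_of_ereal s * fst z \<le> snd p - real_of_ereal s * fst p))"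

definition relevant_sets :: "nat \<Rightarrow> nat \<Rightarrow> 'a set \<Rightarrow> ((nat \<Rightarrow> 'a) \<Rightarrow> real) \<Rightarrow> 'a set set" where
  "relevant_sets n k T q = {C. C \<subseteq> T \<and> card C = k \<and> qC n k T q C > 0}"

text \<open>u(P) for a point collection P; f = fst gives u_R, f = snd gives u_S.\<close>
definition pc_utility :: "nat \<Rightarrow> nat \<Rightarrow> 'a set \<Rightarrow> ((nat \<Rightarrow> 'a) \<Rightarrow> real) \<Rightarrow> (real \<times> real \<Rightarrow> real)
     \<Rightarrow> ('a set \<Rightarrow> real \<times> real) \<Rightarrow> real" where
  "pc_utility n k T q f P = (\<Sum>C\<in>relevant_sets n k T q. qC n k T q C * f (P C))"

definition s_Pareto :: "nat \<Rightarrow> nat \<Rightarrow> 'a set \<Rightarrow> ((nat \<Rightarrow> 'a) \<Rightarrow> real) \<Rightarrow> ('a \<Rightarrow> real) \<Rightarrow> ('a \<Rightarrow> real)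
     \<Rightarrow> ereal \<Rightarrow> ('a set \<Rightarrow> real \<times> real) \<Rightarrow> bool" where
  "s_Pareto n k T q \<rho> \<xi> s P \<longleftrightarrow>
     (\<forall>C\<in>relevant_sets n k T q. corresponds_slope \<rho> \<xi> s C (P C))
     \<and> pc_utility n k T q fst P \<ge> rho_E n T q \<rho>"

end

theory Submission
  imports Defs
begin

text \<open>Write each point p(C) as a convex combination of the types in C and let the scheme, in a
  state whose first k types form C, recommend action i with the weight of \<open>\<theta> i\<close>. Persuasiveness
  uses only symmetry and \<open>u\<^sub>R \<ge> \<rho>\<^sub>E\<close>, not the slope condition: by symmetry
  the joint value \<open>A i j = E[\<phi>(\<theta>,i) \<rho>(\<theta>\<^sub>j)]\<close> is the same
  number D on the diagonal, its column sums are all equal to \<open>\<rho>\<^sub>E\<close>, and an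
  off-diagonal entry is constant along its column apart from the diagonal. Hence a column reads
  \<open>\<rho>\<^sub>E = k A i j\<close> (for j > k) or \<open>\<rho>\<^sub>E = D + (k-1) A i j\<close> (for j \<le> k),
  and \<open>k D = u\<^sub>R \<ge> \<rho>\<^sub>E\<close> gives \<open>A i j \<le> D = A i i\<close>.\<close>

lemma convex_hull_image_weights:
  fixes g :: "'a \<Rightarrow> 'b::real_vector"
  assumes fin: "finite S" and y: "y \<in> convex hull (g ` S)"
  shows "\<exists>u. (\<forall>x\<in>S. 0 \<le> u x) \<and> sum u S = 1 \<and> (\<Sum>x\<in>S. u x *\<^sub>R g x) = y"
proof -
  obtain w where w0: "\<forall>z\<in>g ` S. 0 \<le> w z" and w1: "sum w (g ` S) = 1"
    and wy: "(\<Sum>z\<in>g ` S. w z *\<^sub>R z) = y"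
    using y convex_hull_finite[of "g ` S"] fin by auto
  \<comment> \<open>Put the whole weight of each point on one chosen preimage.\<close>
  define f where "f = inv_into S g"
  define u where "u x = (if x \<in> f ` g ` S then w (g x) else 0)" for x
  have f_sub: "f ` g ` S \<subseteq> S" and f_inj: "inj_on f (g ` S)"
    by (auto simp: f_def inv_into_into inj_on_inv_into)
  have pull: "(\<Sum>x\<in>S. u x *\<^sub>R h (g x)) = (\<Sum>z\<in>g ` S. w z *\<^sub>R h z)"
    for h :: "'b \<Rightarrow> 'c::real_vector"
  proof -
    have "(\<Sum>x\<in>S. u x *\<^sub>R h (g x)) = (\<Sum>x\<in>f ` g ` S. w (g x) *\<^sub>R h (g x))"
      using fin f_sub by (intro sum.mono_neutral_cong_right) (auto simp: u_def)
    also have "\<dots> = (\<Sum>z\<in>g ` S. w z *\<^sub>R h z)"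
      unfolding sum.reindex[OF f_inj] by (intro sum.cong) (auto simp: f_def f_inv_into_f)
    finally show ?thesis .
  qed
  have "(\<forall>x\<in>S. 0 \<le> u x)" using w0 by (auto simp: u_def)
  moreover have "sum u S = 1" using pull[of "\<lambda>_. 1::real"] w1 by simp
  moreover have "(\<Sum>x\<in>S. u x *\<^sub>R g x) = y" using pull[of id] wy by simp
  ultimately show ?thesis by blast
qed

lemma perm_act_apply: "\<pi> permutes S \<Longrightarrow> perm_act \<pi> \<theta> (\<pi> i) = \<theta> i"
  by (simp add: perm_act_def permutes_inverses(2))

lemma perm_act_image:
  assumes "\<pi> permutes S" and "\<pi> ` A = A"
  shows "perm_act \<pi> \<theta> ` A = \<theta> ` A"
proof -
  have "inv \<pi> ` A = A"
    using assms image_inv_f_f[OF permutes_inj[OF assms(1)], of A] by simp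
  then show ?thesis unfolding perm_act_def image_comp[symmetric] by simp
qed

lemma perm_act_in_states:
  assumes "\<pi> permutes {1..n}" and "\<theta> \<in> states n T"
  shows "perm_act \<pi> \<theta> \<in> states n T"
proof -
  have ip: "inv \<pi> permutes {1..n}" using assms(1) by (rule permutes_inv)
  show ?thesis using assms(2) permutes_in_image[OF ip] permutes_not_in[OF ip]
    unfolding states_def perm_act_def PiE_def Pi_def extensional_def by auto
qed

lemma bij_betw_perm_act_states:
  assumes p: "\<pi> permutes {1..n}"
  shows "bij_betw (perm_act \<pi>) (states n T) (states n T)"
proof (rule bij_betw_byWitness[where f'="perm_act (inv \<pi>)"])
  have bp: "bij \<pi>" using p by (rule permutes_bij)
  show "\<forall>a\<in>states n T. perm_act (inv \<pi>) (perm_act \<pi> a) = a"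
    by (simp add: perm_act_def inv_inv_eq[OF bp] o_assoc[symmetric] permutes_inv_o(2)[OF p])
  show "\<forall>a\<in>states n T. perm_act \<pi> (perm_act (inv \<pi>) a) = a"
    by (simp add: perm_act_def inv_inv_eq[OF bp] o_assoc[symmetric] permutes_inv_o(1)[OF p])
  show "perm_act \<pi> ` states n T \<subseteq> states n T"
    "perm_act (inv \<pi>) ` states n T \<subseteq> states n T"
    using perm_act_in_states[OF p] perm_act_in_states[OF permutes_inv[OF p]] by auto
qed

lemma sum_states_perm_act:
  assumes si: "symmetric_instance n T q" and p: "\<pi> permutes {1..n}"
  shows "(\<Sum>\<theta>\<in>states n T. q \<theta> * g (perm_act \<pi> \<theta>)) = (\<Sum>\<theta>\<in>states n T. q \<theta> * g \<theta>)"
proof -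
  have "(\<Sum>\<theta>\<in>states n T. q \<theta> * g \<theta>)
      = (\<Sum>\<theta>\<in>states n T. q (perm_act \<pi> \<theta>) * g (perm_act \<pi> \<theta>))"
    using sum.reindex_bij_betw[OF bij_betw_perm_act_states[OF p], of "\<lambda>\<theta>. q \<theta> * g \<theta>"] by simp
  also have "\<dots> = (\<Sum>\<theta>\<in>states n T. q \<theta> * g (perm_act \<pi> \<theta>))"
    using si p unfolding symmetric_instance_def by (intro sum.cong) auto
  finally show ?thesis by simp
qed

definition action_value :: "nat \<Rightarrow> 'a set \<Rightarrow> ((nat \<Rightarrow> 'a) \<Rightarrow> real) \<Rightarrow> ('a \<Rightarrow> real) \<Rightarrow> nat \<Rightarrow> real"
  where "action_value n T q f j = (\<Sum>\<theta>\<in>states n T. q \<theta> * f (\<theta> j))"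

definition joint_value :: "nat \<Rightarrow> 'a set \<Rightarrow> ((nat \<Rightarrow> 'a) \<Rightarrow> real) \<Rightarrow> ('a \<Rightarrow> real)
    \<Rightarrow> ((nat \<Rightarrow> 'a) \<Rightarrow> nat \<Rightarrow> real) \<Rightarrow> nat \<Rightarrow> nat \<Rightarrow> real"
  where "joint_value n T q f \<phi> i j = (\<Sum>\<theta>\<in>states n T. q \<theta> * \<phi> \<theta> i * f (\<theta> j))"

lemma action_value_eq_rho_E:
  assumes si: "symmetric_instance n T q" and j: "j \<in> {1..n}"
  shows "action_value n T q \<rho> j = rho_E n T q \<rho>"
proof -
  have perm: "action_value n T q \<rho> (\<pi> j) = action_value n T q \<rho> j" if p: "\<pi> permutes {1..n}" for \<pi> j
    using sum_states_perm_act[OF si p, of "\<lambda>\<theta>. \<rho> (\<theta> (\<pi> j))"]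
    by (simp add: action_value_def perm_act_apply[OF p])
  have const: "action_value n T q \<rho> j' = action_value n T q \<rho> j" if "j' \<in> {1..n}" for j'
    using perm[of "Transposition.transpose j j'" j] that j by (simp add: permutes_swap_id)
  have "action_value n T q \<rho> ` {1..n} = {action_value n T q \<rho> j}"
    using const j by blast
  then show ?thesis unfolding rho_E_def action_value_def[abs_def] by simp
qed

context
  fixes n k :: nat and T :: "'a set" and q :: "(nat \<Rightarrow> 'a) \<Rightarrow> real" and \<phi> :: "(nat \<Rightarrow> 'a) \<Rightarrow> nat \<Rightarrow> real"
  assumes si: "symmetric_instance n T q"
    and scheme: "symmetric_scheme n k T \<phi>"
    and k_le_n: "k \<le> n"
begin

lemma joint_value_perm:
  assumes p: "\<pi> permutes {1..n}" and pk: "\<pi> ` {1..k} = {1..k}" and i: "i \<in> {1..k}"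
  shows "joint_value n T q f \<phi> (\<pi> i) (\<pi> j) = joint_value n T q f \<phi> i j"
proof -
  have "joint_value n T q f \<phi> (\<pi> i) (\<pi> j)
      = (\<Sum>\<theta>\<in>states n T. q \<theta> * (\<phi> (perm_act \<pi> \<theta>) (\<pi> i) * f (perm_act \<pi> \<theta> (\<pi> j))))"
    unfolding joint_value_def
    by (subst sum_states_perm_act[OF si p]) (simp add: mult.assoc)
  also have "\<dots> = joint_value n T q f \<phi> i j"
    using scheme p pk i unfolding symmetric_scheme_def joint_value_def
    by (intro sum.cong) (auto simp: perm_act_apply[OF p] mult.assoc)
  finally show ?thesis .
qed

lemma joint_value_transpose:
  assumes "a \<in> {1..k}" and "b \<in> {1..k}" and "i \<in> {1..k}"
  shows "joint_value n T q f \<phi> (Transposition.transpose a b i) (Transposition.transpose a b j)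
       = joint_value n T q f \<phi> i j"
  using assms k_le_n
  by (intro joint_value_perm permutes_swap_id permutes_image[OF permutes_swap_id]) auto

lemma sum_joint_value: "(\<Sum>i=1..k. joint_value n T q f \<phi> i j) = action_value n T q f j"
proof -
  have "(\<Sum>i=1..k. joint_value n T q f \<phi> i j)
      = (\<Sum>\<theta>\<in>states n T. q \<theta> * f (\<theta> j) * (\<Sum>i=1..k. \<phi> \<theta> i))"
    unfolding joint_value_def sum_distrib_left
    by (subst sum.swap) (intro sum.cong refl, simp only: mult_ac)
  then show ?thesis
    using scheme unfolding symmetric_scheme_def action_value_def by simp
qed

lemma joint_value_diag:
  assumes "i \<in> {1..k}"
  shows "joint_value n T q f \<phi> i i = joint_value n T q f \<phi> 1 1"
  using joint_value_transpose[of 1 i 1 f 1] assms by simp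

lemma scheme_utility_eq_joint_value:
  "scheme_utility n k T q f \<phi> = real k * joint_value n T q f \<phi> 1 1"
proof -
  have "scheme_utility n k T q f \<phi> = (\<Sum>i=1..k. joint_value n T q f \<phi> i i)"
    unfolding scheme_utility_def joint_value_def sum_distrib_left
    by (subst sum.swap) (intro sum.cong refl, simp only: mult_ac)
  also have "\<dots> = (\<Sum>i=1..k. joint_value n T q f \<phi> 1 1)"
    by (intro sum.cong refl joint_value_diag)
  finally show ?thesis by simp
qed

lemma action_value_outside_signals:
  assumes i: "i \<in> {1..k}" and j: "j \<notin> {1..k}"
  shows "action_value n T q f j = real k * joint_value n T q f \<phi> i j"
proof -
  have "joint_value n T q f \<phi> i' j = joint_value n T q f \<phi> i j" if i': "i' \<in> {1..k}" for i'
  proof -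
    have "j \<noteq> i" "j \<noteq> i'" using i i' j by auto
    then show ?thesis using joint_value_transpose[OF i i' i, of f j] by simp
  qed
  then show ?thesis
    using sum_joint_value[of f j] by simp
qed

lemma action_value_inside_signals:
  assumes i: "i \<in> {1..k}" and j: "j \<in> {1..k}" and "j \<noteq> i"
  shows "action_value n T q f i
       = joint_value n T q f \<phi> i i + real (k - 1) * joint_value n T q f \<phi> i j"
proof -
  \<comment> \<open>The transposition of i' and j fixes i and moves the signal i' to j.\<close>
  have off: "joint_value n T q f \<phi> i' i = joint_value n T q f \<phi> i j" if "i' \<in> {1..k} - {i}" for i'
    using joint_value_transpose[of i' j i' f i] joint_value_transpose[OF i j i, of f j] that j assms(3)
    by auto
  have "action_value n T q f i = joint_value n T q f \<phi> i i + (\<Sum>i'\<in>{1..k}-{i}. joint_value n T q f \<phi> i' i)"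
    using sum_joint_value[of f i] sum.remove[OF finite_atLeastAtMost i, of "\<lambda>i'. joint_value n T q f \<phi> i' i"]
    by simp
  also have "(\<Sum>i'\<in>{1..k}-{i}. joint_value n T q f \<phi> i' i) = real (k - 1) * joint_value n T q f \<phi> i j"
    using off i by simp
  finally show ?thesis .
qed

lemma symmetric_scheme_persuasive:
  assumes uR: "rho_E n T q \<rho> \<le> scheme_utility n k T q \<rho> \<phi>"
  shows "persuasive n k T q \<rho> \<phi>"
  unfolding persuasive_def
proof (intro ballI impI)
  fix i j assume i: "i \<in> {1..k}" and sp: "signal_prob n T q \<phi> i > 0" and j: "j \<in> {1..n}"
  let ?A = "joint_value n T q \<rho> \<phi>"
  have uR': "action_value n T q \<rho> j' \<le> real k * ?A i i" if "j' \<in> {1..n}" for j'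
    using uR action_value_eq_rho_E[OF si that] joint_value_diag[OF i]
    by (simp add: scheme_utility_eq_joint_value)
  have "?A i j \<le> ?A i i"
  proof (cases "j \<in> {1..k}")
    case True
    show ?thesis
    proof (cases "j = i")
      case False
      have "real (k - 1) * ?A i j \<le> real (k - 1) * ?A i i"
        using uR'[of i] action_value_inside_signals[OF i True False] i k_le_n
        by (simp add: of_nat_diff algebra_simps)
      moreover have "k - 1 > 0" using i True False by auto
      ultimately show ?thesis by simp
    qed simp
  next
    case False
    have "real k * ?A i j \<le> real k * ?A i i"
      using uR'[OF j] action_value_outside_signals[OF i False] by simp
    then show ?thesis using i by simp
  qed
  then show "cond_value n T q \<rho> \<phi> i j \<le> cond_value n T q \<rho> \<phi> i i"
    using sp unfolding cond_value_def joint_value_def by (simp add: divide_right_mono)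
qed

end

text \<open>The uniform fallback only concerns states of probability zero.\<close>

definition weight_scheme :: "nat \<Rightarrow> 'a set set \<Rightarrow> ('a set \<Rightarrow> 'a \<Rightarrow> real) \<Rightarrow> (nat \<Rightarrow> 'a) \<Rightarrow> nat \<Rightarrow> real"
  where "weight_scheme k R w \<theta> i =
    (if \<theta> ` {1..k} \<in> R then w (\<theta> ` {1..k}) (\<theta> i) else 1 / real k)"

definition convex_weights :: "nat \<Rightarrow> 'a set set \<Rightarrow> ('a set \<Rightarrow> 'a \<Rightarrow> real) \<Rightarrow> bool"
  where "convex_weights k R w \<longleftrightarrow>
    (\<forall>C\<in>R. card C = k \<and> (\<forall>c\<in>C. 0 \<le> w C c) \<and> sum (w C) C = 1)"

lemma sum_weight_scheme:
  assumes w: "convex_weights k R w" and R: "\<theta> ` {1..k} \<in> R"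
  shows "(\<Sum>i=1..k. weight_scheme k R w \<theta> i * h (\<theta> i))
       = (\<Sum>c\<in>\<theta> ` {1..k}. w (\<theta> ` {1..k}) c * h c)"
proof -
  have "inj_on \<theta> {1..k}"
    using w R unfolding convex_weights_def by (intro eq_card_imp_inj_on) auto
  then show ?thesis using R by (simp add: weight_scheme_def sum.reindex)
qed

lemma symmetric_scheme_weight_scheme:
  assumes k: "1 \<le> k" and w: "convex_weights k R w"
  shows "symmetric_scheme n k T (weight_scheme k R w)"
  unfolding symmetric_scheme_def
proof (intro conjI ballI allI impI)
  fix \<theta> i assume "i \<in> {1..k}"
  then show "0 \<le> weight_scheme k R w \<theta> i"
    using w unfolding weight_scheme_def convex_weights_def by auto
next
  fix \<theta>
  show "(\<Sum>i=1..k. weight_scheme k R w \<theta> i) = 1"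
  proof (cases "\<theta> ` {1..k} \<in> R")
    case True
    then show ?thesis
      using sum_weight_scheme[OF w True, of "\<lambda>_. 1"] w unfolding convex_weights_def by simp
  qed (use k in \<open>simp add: weight_scheme_def\<close>)
next
  fix \<pi> \<theta> i assume "\<pi> permutes {1..n}" and "\<pi> ` {1..k} = {1..k}"
  then show "weight_scheme k R w (perm_act \<pi> \<theta>) (\<pi> i) = weight_scheme k R w \<theta> i"
    by (simp add: weight_scheme_def perm_act_image perm_act_apply)
qed

lemma relevant_sets_image:
  assumes si: "symmetric_instance n T q" and T: "finite T" and k_le_n: "k \<le> n"
    and \<theta>: "\<theta> \<in> states n T" and pos: "q \<theta> > 0"
  shows "\<theta> ` {1..k} \<in> relevant_sets n k T q"
proof -
  have "inj_on \<theta> {1..k}"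
    using si \<theta> pos k_le_n unfolding symmetric_instance_def by (auto intro: inj_on_subset)
  then have "card (\<theta> ` {1..k}) = k" by (simp add: card_image)
  moreover have "\<theta> ` {1..k} \<subseteq> T" using \<theta> k_le_n unfolding states_def by auto
  moreover have "q \<theta> \<le> qC n k T q (\<theta> ` {1..k})"
    unfolding qC_def using si \<theta> T
    by (intro member_le_sum) (auto simp: symmetric_instance_def is_distribution_def states_def finite_PiE)
  ultimately show ?thesis using pos unfolding relevant_sets_def by auto
qed

lemma scheme_utility_weight_scheme:
  assumes si: "symmetric_instance n T q" and T: "finite T" and k_le_n: "k \<le> n"
    and w: "convex_weights k (relevant_sets n k T q) w"
  shows "scheme_utility n k T q f (weight_scheme k (relevant_sets n k T q) w)
       = (\<Sum>C\<in>relevant_sets n k T q. qC n k T q C * (\<Sum>c\<in>C. w C c * f c))"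
proof -
  let ?R = "relevant_sets n k T q" and ?St = "states n T"
  have finSt: "finite ?St" unfolding states_def using T by (simp add: finite_PiE)
  have finR: "finite ?R" using T unfolding relevant_sets_def by (auto intro: finite_subset[of _ "Pow T"])
  have "scheme_utility n k T q f (weight_scheme k ?R w)
      = (\<Sum>\<theta>\<in>{\<theta>\<in>?St. \<theta> ` {1..k} \<in> ?R}. q \<theta> * (\<Sum>c\<in>\<theta> ` {1..k}. w (\<theta> ` {1..k}) c * f c))"
  proof -
    have "q \<theta> = 0" if "\<theta> \<in> ?St" "\<theta> ` {1..k} \<notin> ?R" for \<theta>
      using that relevant_sets_image[OF si T k_le_n that(1)] si
      unfolding symmetric_instance_def is_distribution_def by force
    moreover have "(\<Sum>i=1..k. weight_scheme k ?R w \<theta> i * f (\<theta> i))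
        = (\<Sum>c\<in>\<theta> ` {1..k}. w (\<theta> ` {1..k}) c * f c)" if "\<theta> ` {1..k} \<in> ?R" for \<theta>
      by (rule sum_weight_scheme[OF w that])
    ultimately show ?thesis
      unfolding scheme_utility_def using finSt by (intro sum.mono_neutral_cong_right) auto
  qed
  also have "\<dots> = (\<Sum>C\<in>?R. \<Sum>\<theta>\<in>{\<theta>\<in>{\<theta>\<in>?St. \<theta> ` {1..k} \<in> ?R}. \<theta> ` {1..k} = C}.
      q \<theta> * (\<Sum>c\<in>\<theta> ` {1..k}. w (\<theta> ` {1..k}) c * f c))"
    by (rule sum.group[symmetric]) (use finSt finR in auto)
  also have "\<dots> = (\<Sum>C\<in>?R. qC n k T q C * (\<Sum>c\<in>C. w C c * f c))"
    unfolding qC_def sum_distrib_right by (intro sum.cong refl) auto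
  finally show ?thesis .
qed

theorem lemma3p4:
  fixes n k :: nat and T :: "'a set" and q :: "(nat \<Rightarrow> 'a) \<Rightarrow> real"
    and \<rho> \<xi> :: "'a \<Rightarrow> real" and s :: ereal and P :: "'a set \<Rightarrow> real \<times> real"
  assumes "finite T" and "2 \<le> k" and "k \<le> n"
    and "symmetric_instance n T q"
    and "s \<le> 0"
    and "s_Pareto n k T q \<rho> \<xi> s P"
  shows "\<exists>\<phi>. symmetric_scheme n k T \<phi> \<and> persuasive n k T q \<rho> \<phi>
           \<and> scheme_utility n k T q \<xi> \<phi> = pc_utility n k T q snd P
           \<and> scheme_utility n k T q \<rho> \<phi> = pc_utility n k T q fst P"
proof -
  let ?R = "relevant_sets n k T q"
  have "\<exists>u. (\<forall>c\<in>C. 0 \<le> u c) \<and> sum u C = 1 \<and> (\<Sum>c\<in>C. u c *\<^sub>R (\<rho> c, \<xi> c)) = P C" if "C \<in> ?R" for C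
    using that assms(2,6) unfolding s_Pareto_def corresponds_slope_def conv_pts_def relevant_sets_def
    by (intro convex_hull_image_weights) (auto intro: card_ge_0_finite)
  then obtain w where w: "\<And>C. C \<in> ?R \<Longrightarrow> (\<forall>c\<in>C. 0 \<le> w C c) \<and> sum (w C) C = 1
      \<and> (\<Sum>c\<in>C. w C c *\<^sub>R (\<rho> c, \<xi> c)) = P C"
    by metis
  have cw: "convex_weights k ?R w"
    using w unfolding convex_weights_def relevant_sets_def by blast
  define \<phi> where "\<phi> = weight_scheme k ?R w"
  have scheme: "symmetric_scheme n k T \<phi>"
    unfolding \<phi>_def using assms(2) cw by (intro symmetric_scheme_weight_scheme) auto
  have "(\<Sum>c\<in>C. w C c * \<rho> c) = fst (P C)" "(\<Sum>c\<in>C. w C c * \<xi> c) = snd (P C)" if "C \<in> ?R" for C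
  proof -
    have "P C = (\<Sum>c\<in>C. (w C c * \<rho> c, w C c * \<xi> c))" using w[OF that] by simp
    then show "(\<Sum>c\<in>C. w C c * \<rho> c) = fst (P C)" "(\<Sum>c\<in>C. w C c * \<xi> c) = snd (P C)"
      by (simp_all add: fst_sum snd_sum)
  qed
  then have uS: "scheme_utility n k T q \<xi> \<phi> = pc_utility n k T q snd P"
    and uR: "scheme_utility n k T q \<rho> \<phi> = pc_utility n k T q fst P"
    unfolding \<phi>_def scheme_utility_weight_scheme[OF assms(4,1,3) cw] pc_utility_def
    by (auto intro: sum.cong)
  have "persuasive n k T q \<rho> \<phi>"
    using symmetric_scheme_persuasive[OF assms(4) scheme assms(3)] uR assms(6)
    unfolding s_Pareto_def by simp
  then show ?thesis using scheme uS uR by blast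
qed

end
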